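(* Let $m\ge1$, $\boldsymbol\gamma=(\gamma_1,\ldots,\gamma_m)\in\mathbb{N}^m$, $\boldsymbol f=(f_1,\ldots,f_{m+1})$ a tuple of arithmetic functions and $\xi:\mathbb{N}^m\to\mathbb{C}$. For every $n_1\in\mathbb{N}$ and all $n_2,\ldots,n_{m+1}\in\mathbb{N}$, \[ S^{\boldsymbol\gamma,\xi}_{\boldsymbol f}(n_1,\ldots,n_{m+1})=\sum_{l_2,\ldots,l_{m+1}=1}^{n_1}a_{n_1}(l_2,\ldots,l_{m+1})\,e(n_1,n_2l_2)\cdots e(n_1,n_{m+1}l_{m+1}) =\sum_{d_2,\ldots,d_{m+1}\mid n_1}\alpha_{n_1}(d_2,\ldots,d_{m+1})\,c(d_2,n_2)\cdots c(d_{m+1},n_{m+1}), \] where \[ a_{n_1}(l_2,\ldots,l_{m+1})=n_1^{-m}\,S^{{}^t\xi^{\boldsymbol\gamma}_{n_1}}_{{}^t\widetilde{\boldsymbol f}}(n_1,l_{m+1},\ldots,l_2),\qquad \alpha_{n_1}(d_2,\ldots,d_{m+1})=n_1^{-m}\,S^{{}^t\xi^{\boldsymbol\gamma}_{n_1}}_{{}^t\widetilde{\boldsymbol f}}\Bigl(n_1,\frac{n_1}{d_{m+1}},\ldots,\frac{n_1}{d_2}\Bigr). \] (These are the unique finite Fourier coefficients of $(n_2,\ldots,n_{m+1})\mapsto S^{\boldsymbol\gamma,\xi}_{\boldsymbol f}(n_1,\ldots,n_{m+1})$.)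
   Context: An arithmetic function is a map $f:\mathbb{N}\to\mathbb{C}$, with $f(x)=0$ for $x\notin\mathbb{N}$. $\delta^x(n):=n^x$. For $\gamma\in\mathbb{N}$, $a_\gamma(n)=1$ if $n$ is a $\gamma$-th power of a positive integer and $0$ otherwise. $e(r,n):=\exp(2\pi\sqrt{-1}\,n/r)$, and $c(k,n):=\sum_{d\mid\gcd(k,n)}\mu(k/d)\,d$ is the Ramanujan sum ($\mu$ the Möbius function). For $\boldsymbol\gamma\in\mathbb{N}^m$, arithmetic functions $g_1,\ldots,g_{m+1}$ and a weight $\eta:\mathbb{N}^m\to\mathbb{C}$, define \[ S^{\boldsymbol\gamma,\eta}_{g_1,\ldots,g_{m+1}}(n_1,\ldots,n_{m+1}):=\sum_{\substack{(d_1,\ldots,d_m)\in\mathbb{N}^m\\ d_j^{\gamma_j}\mid\gcd(n_1,\ldots,n_{j+1})\ (1\le j\le m)}}\eta(d_1^{\gamma_1},\ldots,d_m^{\gamma_m})\, g_1\Bigl(\frac{n_1}{d_1^{\gamma_1}}\Bigr)g_2\Bigl(\frac{d_1^{\gamma_1}}{d_2^{\gamma_2}}\Bigr)\cdots g_m\Bigl(\frac{d_{m-1}^{\gamma_{m-1}}}{d_m^{\gamma_m}}\Bigr)g_{m+1}\bigl(d_m^{\gamma_m}\bigr), \] and write $S^{\eta}_{g_1,\ldots,g_{m+1}}:=S^{(1,\ldots,1),\eta}_{g_1,\ldots,g_{m+1}}$. For $\boldsymbol f=(f_1,\ldots,f_{m+1})$ set ${}^t\widetilde{\boldsymbol f}:=(\delta^0f_{m+1},\delta^1f_m,\ldots,\delta^mf_1)$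 (products of functions taken pointwise), and for $n\in\mathbb{N}$ set \[ {}^t\xi^{\boldsymbol\gamma}_n(d_1,\ldots,d_m):=\Bigl(\prod_{j=1}^m a_{\gamma_j}\Bigl(\frac{n}{d_{m+1-j}}\Bigr)\Bigr)\,\xi\Bigl(\frac{n}{d_m},\ldots,\frac{n}{d_1}\Bigr) \] (only values with $d_j\mid n$ are used). *)

theory Defs
  imports Complex_Main "HOL-Computational_Algebra.Squarefree"
begin

(* Tuples in N^k are represented as lists of length k (0-indexed: entry j of the
   list is the (j+1)-th coordinate).  Arithmetic functions are nat => complex;
   only positive arguments are ever relevant. *)

(* value of an arithmetic function g at the rational number a/b:
   g(a/b) if b divides a, and 0 otherwise (convention f(x)=0 for x not in N) *)
definition arith_at :: "(nat \<Rightarrow> complex) \<Rightarrow> nat \<Rightarrow> nat \<Rightarrow> complex" where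
  "arith_at g a b = (if b dvd a then g (a div b) else 0)"

definition a_pow :: "nat \<Rightarrow> nat \<Rightarrow> complex" where
  "a_pow \<gamma> n = (if \<exists>r::nat. 0 < r \<and> r ^ \<gamma> = n then 1 else 0)"

definition e_fun :: "nat \<Rightarrow> nat \<Rightarrow> complex" where
  "e_fun r n = exp (2 * pi * \<i> * of_nat n / of_nat r)"

definition moebius :: "nat \<Rightarrow> int" where
  "moebius n = (if n = 0 then 0 else if squarefree n then (-1) ^ card (prime_factors n) else 0)"

definition ramanujan :: "nat \<Rightarrow> nat \<Rightarrow> complex" where
  "ramanujan k n = (\<Sum>d\<in>{d. d dvd gcd k n}. of_int (moebius (k div d)) * of_nat d)"

(* S^{gamma,eta}_{g_1..g_{m+1}}(n_1..n_{m+1}); gam has length m, g and ns have length m+1.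
   The summation variable ds = (d_1..d_m), D = (d_1^gamma_1, .., d_m^gamma_m),
   Q = (n_1, D_1, .., D_m, 1), and the product is prod_{i=1}^{m+1} g_i(Q_i / Q_{i+1}). *)
definition S_fun :: "nat list \<Rightarrow> (nat list \<Rightarrow> complex) \<Rightarrow> (nat \<Rightarrow> complex) list \<Rightarrow> nat list \<Rightarrow> complex" where
  "S_fun gam \<eta> g ns =
    (let m = length gam in
     \<Sum>ds\<in>{ds. length ds = m \<and>
              (\<forall>j<m. 0 < ds ! j \<and> (ds ! j) ^ (gam ! j) dvd Gcd (set (take (j + 2) ns)))}.
       (let D = map (\<lambda>j. (ds ! j) ^ (gam ! j)) [0..<m];
            Q = (ns ! 0) # D @ [1]
        in \<eta> D * (\<Prod>i<m + 1. arith_at (g ! i) (Q ! i) (Q ! (i + 1)))))"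

definition S1_fun :: "nat \<Rightarrow> (nat list \<Rightarrow> complex) \<Rightarrow> (nat \<Rightarrow> complex) list \<Rightarrow> nat list \<Rightarrow> complex" where
  "S1_fun m \<eta> g ns = S_fun (replicate m 1) \<eta> g ns"

(* ^t(f~) = (delta^0 f_{m+1}, delta^1 f_m, .., delta^m f_1) for f = (f_1..f_{m+1}) *)
definition f_tilde_t :: "(nat \<Rightarrow> complex) list \<Rightarrow> (nat \<Rightarrow> complex) list" where
  "f_tilde_t f = (let m = length f - 1 in
     map (\<lambda>k x. of_nat x ^ k * (f ! (m - k)) x) [0..<m + 1])"

(* ^t xi^gamma_n (d_1..d_m) = (prod_{j=1}^m a_{gamma_j}(n/d_{m+1-j})) xi(n/d_m, .., n/d_1)
   (only used for d_j dividing n) *)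
definition xi_t :: "nat list \<Rightarrow> (nat list \<Rightarrow> complex) \<Rightarrow> nat \<Rightarrow> nat list \<Rightarrow> complex" where
  "xi_t gam \<xi> n ds = (let m = length gam in
     (\<Prod>j<m. a_pow (gam ! j) (n div (ds ! (m - 1 - j)))) * \<xi> (map (\<lambda>d. n div d) (rev ds)))"

end

theory Submission
  imports Defs
begin

(* Write D = (d_1^gamma_1, ..., d_m^gamma_m).  A nonzero term of S forces n_1, D_1, ..., D_m, 1 to
   be a divisor chain, and on such a chain the condition D_j | gcd(n_1, ..., n_{j+1}) reduces to
   D_j | n_{j+1}.  Hence S is a sum over lists D of divisors of n_1 of a weight times
   prod_j [D_j | n_{j+1}].  Each indicator has the finite Fourier expansion
   [D | x] = (1/D) sum_{l <= n_1, (n_1/D) | l} e(n_1, x l).  Collecting coefficients and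
   substituting D -> (n_1/D_m, ..., n_1/D_1) identifies the coefficient at (l_2, ..., l_{m+1}) with
   n_1^-m S^{t xi}_{t f~}(n_1, l_{m+1}, ..., l_2): the substitution reverses the quotients of
   consecutive chain entries, and the weights delta^j telescope to n_1^m / prod_j D_j.  The
   coefficient depends on each l_j only through gcd(n_1, l_j); grouping the l_j by the value
   d = n_1/gcd(n_1, l_j) turns the sums of exponentials into Ramanujan sums c(d, n_j). *)

lemma dvd_div_div_iff:
  fixes n a b :: nat
  assumes "0 < n" "a dvd n" "b dvd n"
  shows "n div b dvd n div a \<longleftrightarrow> a dvd b"
  by (metis (mono_tags, lifting) assms div_dvd_iff_mult div_greater_zero_iff dvd_div_mult_self
      dvd_imp_le dvd_pos_nat nat_mult_dvd_cancel1 order_less_imp_not_eq2)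

lemma div_div_div_of_dvd:
  fixes n a b :: nat
  assumes "0 < n" "a dvd b" "b dvd n"
  shows "(n div a) div (n div b) = b div a"
  by (metis assms(1,3) div_mult2_eq div_mult_mult2 dvd_div_eq_0_iff dvd_mult_div_cancel nat_less_le)

lemma div_dvd_self_of_dvd: "d dvd n \<Longrightarrow> n div d dvd (n::nat)"
  by (metis dvd_div_mult_self dvd_triv_left)

lemma div_div_cancel_of_dvd: "0 < (n::nat) \<Longrightarrow> d dvd n \<Longrightarrow> n div (n div d) = d"
  by auto

lemma prod_of_bool:
  "finite A \<Longrightarrow> (\<Prod>i\<in>A. of_bool (P i) :: 'a :: comm_semiring_1) = of_bool (\<forall>i\<in>A. P i)"
  by (induction A rule: finite_induct) auto

lemma dvd_chain:
  fixes q :: "nat \<Rightarrow> 'a::comm_monoid_mult"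
  assumes "\<And>k. k < N \<Longrightarrow> q (Suc k) dvd q k" "i \<le> j" "j \<le> N"
  shows "q j dvd q i"
  using assms(2,3) by (induction j rule: dec_induct) (auto intro: dvd_trans[OF assms(1)])

lemma prod_ratio_powers_telescope:
  fixes q :: "nat \<Rightarrow> 'a::field"
  assumes "\<And>k. k \<le> m \<Longrightarrow> q k \<noteq> 0"
  shows "(\<Prod>k\<le>m. (q k / q (Suc k)) ^ (m - k)) = q 0 ^ m / (\<Prod>k<m. q (Suc k))"
  using assms
proof (induction m)
  case 0
  then show ?case by simp
next
  case (Suc m)
  have "(\<Prod>k\<le>Suc m. (q k / q (Suc k)) ^ (Suc m - k))
      = (\<Prod>k\<le>m. (q k / q (Suc k)) ^ (m - k) * (q k / q (Suc k)))"
    by (simp add: Suc_diff_le mult.commute)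
  also have "\<dots> = (\<Prod>k\<le>m. (q k / q (Suc k)) ^ (m - k)) * (\<Prod>k<Suc m. q k / q (Suc k))"
    by (simp only: prod.distrib lessThan_Suc_atMost)
  also have "\<dots> = q 0 ^ Suc m / (\<Prod>k<Suc m. q (Suc k))"
    using Suc by (simp add: prod_lessThan_telescope')
  finally show ?case .
qed

lemma prod_sum_eq_sum_lists:
  fixes g :: "nat \<Rightarrow> 'b \<Rightarrow> 'a :: comm_semiring_1"
  shows "(\<Prod>j<m. \<Sum>l\<in>A j. g j l)
    = (\<Sum>ls | length ls = m \<and> (\<forall>j<m. ls ! j \<in> A j). \<Prod>j<m. g j (ls ! j))"
proof (induction m arbitrary: A g)
  case 0
  have "{ls. length ls = 0 \<and> (\<forall>j<0. ls ! j \<in> A j)} = {[]}" by auto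
  then show ?case by simp
next
  case (Suc m)
  define L where "L = {ls. length ls = m \<and> (\<forall>j<m. ls ! j \<in> A (Suc j))}"
  have "{ls. length ls = Suc m \<and> (\<forall>j<Suc m. ls ! j \<in> A j)} = (\<lambda>(l, ls). l # ls) ` (A 0 \<times> L)"
    by (auto simp: L_def length_Suc_conv All_less_Suc2 image_iff)
  then have "(\<Sum>ls | length ls = Suc m \<and> (\<forall>j<Suc m. ls ! j \<in> A j). \<Prod>j<Suc m. g j (ls ! j))
      = (\<Sum>(l, ls)\<in>A 0 \<times> L. g 0 l * (\<Prod>j<m. g (Suc j) (ls ! j)))"
    by (simp add: sum.reindex inj_on_def prod.lessThan_Suc_shift split_beta del: prod.lessThan_Suc)
  also have "\<dots> = (\<Sum>l\<in>A 0. g 0 l) * (\<Prod>j<m. \<Sum>l\<in>A (Suc j). g (Suc j) l)"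
    by (simp add: sum.cartesian_product[symmetric] sum_product L_def Suc.IH)
  also have "\<dots> = (\<Prod>j<Suc m. \<Sum>l\<in>A j. g j l)"
    by (simp add: prod.lessThan_Suc_shift del: prod.lessThan_Suc)
  finally show ?case ..
qed

section \<open>Sums of roots of unity\<close>

lemma e_fun_eq_1_iff:
  assumes "0 < r"
  shows "e_fun r n = 1 \<longleftrightarrow> r dvd n"
proof
  assume "e_fun r n = 1"
  then have "cis (2 * pi * n / r) = 1"
    by (simp add: e_fun_def cis_conv_exp field_simps)
  then have "cos (2 * pi * n / r) = 1"
    by (metis cis.sel(1) one_complex.sel(1))
  then obtain k :: int where "2 * pi * n / r = real_of_int k * 2 * pi"
    using cos_one_2pi_int by blast
  then have "real n = real_of_int k * real r"
    using assms by (simp add: field_simps)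
  then have "int n = k * int r"
    by (metis of_int_eq_iff of_int_mult of_int_of_nat_eq)
  then show "r dvd n"
    by (metis dvd_triv_right int_dvd_int_iff)
next
  assume "r dvd n"
  then obtain k where "n = r * k" ..
  then have "e_fun r n = exp (of_nat k * (2 * pi * \<i>))"
    using assms by (simp add: e_fun_def field_simps)
  then show "e_fun r n = 1"
    by (simp add: exp_of_nat_mult)
qed

lemma e_fun_mult: "e_fun r (n * k) = e_fun r n ^ k"
  unfolding e_fun_def by (simp add: exp_of_nat_mult[symmetric] algebra_simps)

lemma e_fun_period: "0 < r \<Longrightarrow> e_fun r n ^ r = 1"
  by (simp add: e_fun_mult[symmetric] e_fun_eq_1_iff)

lemma e_fun_mult_cancel: "0 < c \<Longrightarrow> e_fun (c * r) (c * n) = e_fun r n"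
  unfolding e_fun_def by (simp add: field_simps)

lemma sum_e_fun_period:
  assumes "0 < r"
  shows "(\<Sum>k\<in>{1..r}. e_fun r (n * k)) = of_bool (r dvd n) * of_nat r"
proof -
  define w where "w = e_fun r n"
  have "(\<Sum>k\<in>{1..r}. w ^ k) = w * (\<Sum>k<r. w ^ k)"
    by (simp add: sum.atLeast1_atMost_eq sum_distrib_left)
  moreover have "(\<Sum>k<r. w ^ k) = 0" if "w \<noteq> 1"
    using geometric_sum[OF that, of r] e_fun_period[OF assms] by (simp add: w_def)
  ultimately show ?thesis
    using e_fun_eq_1_iff[OF assms, of n] by (auto simp: w_def e_fun_mult)
qed

lemma sum_e_fun_multiples:
  assumes "0 < n" "k dvd n"
  shows "(\<Sum>l\<in>{1..n}. of_bool (k dvd l) * e_fun n (x * l)) = of_bool (n div k dvd x) * of_nat (n div k)"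
proof -
  define r where "r = n div k"
  have n: "n = k * r" and "0 < k" "0 < r"
    using assms by (auto simp: r_def)
  have "{1..n} \<inter> {l. k dvd l} = (\<lambda>j. k * j) ` {1..r}"
    using \<open>0 < k\<close> by (auto simp: n image_iff)
  then have "(\<Sum>l\<in>{1..n}. of_bool (k dvd l) * e_fun n (x * l))
      = (\<Sum>j\<in>{1..r}. e_fun (k * r) (k * (x * j)))"
    using \<open>0 < k\<close> by (simp add: sum.reindex inj_on_def n algebra_simps)
  also have "\<dots> = (\<Sum>j\<in>{1..r}. e_fun r (x * j))"
    using \<open>0 < k\<close> by (simp add: e_fun_mult_cancel)
  also have "\<dots> = of_bool (r dvd x) * of_nat r"
    by (rule sum_e_fun_period[OF \<open>0 < r\<close>])
  finally show ?thesis by (simp add: r_def)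
qed

section \<open>Moebius function and Ramanujan sums\<close>

lemma moebius_mult_prime:
  fixes p d :: nat
  assumes p: "prime p" and "\<not> p dvd d" "0 < d"
  shows "moebius (p * d) = - moebius d"
proof -
  have "coprime p d" using assms by (simp add: prime_imp_coprime)
  then have "squarefree (p * d) \<longleftrightarrow> squarefree d"
    using squarefree_multD(2)[of p d] squarefree_mult_coprime squarefree_prime[OF p] by blast
  moreover have "prime_factors (p * d) = insert p (prime_factors d)"
    using assms by (simp add: prime_factors_product prime_gt_0_nat prime_prime_factors)
  moreover have "p \<notin> prime_factors d" using assms by (auto simp: in_prime_factors_iff)
  ultimately show ?thesis using assms by (simp add: moebius_def prime_gt_0_nat)
qed

lemma sum_moebius_dvd:
  fixes n :: nat
  assumes "0 < n"
  shows "(\<Sum>d | d dvd n. moebius d) = of_bool (n = 1)"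
proof (cases "n = 1")
  case True
  then show ?thesis by (simp add: moebius_def)
next
  case False
  then obtain p where p: "prime p" "p dvd n" using prime_factor_nat by blast
  define A where "A = {d. d dvd n \<and> \<not> p dvd d}"
  define B where "B = {d. d dvd n \<and> p dvd d}"
  have fin: "finite A" "finite B" using assms by (auto simp: A_def B_def)
  have split: "(\<Sum>d | d dvd n. moebius d) = sum moebius A + sum moebius B"
    using fin by (subst sum.union_disjoint[symmetric]) (auto intro: sum.cong simp: A_def B_def)
  have "(\<lambda>d. p * d) ` A \<subseteq> B"
    using p by (auto simp: A_def B_def prime_imp_coprime divides_mult)
  moreover have "moebius d = 0" if "d \<in> B - (\<lambda>d. p * d) ` A" for d
  proof -
    from that have "p dvd d" by (simp add: B_def)
    then obtain e where d: "d = p * e" ..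
    have "e dvd n" using that d by (auto simp: B_def intro: dvd_mult_right)
    then have "p dvd e" using that d by (auto simp: A_def)
    then have "\<not> squarefree d" using p(1) d by (intro not_squarefreeI[of p]) (auto simp: power2_eq_square)
    then show ?thesis by (simp add: moebius_def)
  qed
  ultimately have "sum moebius B = (\<Sum>d\<in>A. moebius (p * d))"
    using fin p(1) by (subst sum.mono_neutral_right[of B]) (auto simp: sum.reindex inj_on_def prime_gt_0_nat)
  also have "\<dots> = (\<Sum>d\<in>A. - moebius d)"
    using assms p(1) by (intro sum.cong refl) (auto simp: A_def moebius_mult_prime dvd_pos_nat)
  also have "\<dots> = - sum moebius A"
    by (simp add: sum_negf)
  finally show ?thesis using split False by simp
qed

lemma of_bool_gcd_eq_sum_moebius:
  fixes c d l :: nat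
  assumes "n = c * d" "0 < c" "0 < d"
  shows "(of_bool (gcd n l = c) :: 'a :: comm_ring_1)
    = (\<Sum>e | e dvd d. of_int (moebius e) * of_bool (c * e dvd l))"
proof (cases "c dvd l")
  case False
  then have "gcd n l \<noteq> c" by (metis gcd_dvd2)
  moreover have "\<not> c * e dvd l" for e
    using False dvd_mult_left by blast
  ultimately show ?thesis by simp
next
  case True
  then obtain k where l: "l = c * k" ..
  have "(\<Sum>e | e dvd d. of_int (moebius e) * of_bool (c * e dvd l))
      = (\<Sum>e | e dvd gcd d k. of_int (moebius e) :: 'a)"
    using assms by (intro sum.mono_neutral_cong_right) (auto simp: l)
  also have "\<dots> = of_int (\<Sum>e | e dvd gcd d k. moebius e)"
    by simp
  also have "\<dots> = of_bool (gcd d k = 1)"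
    using assms by (subst sum_moebius_dvd) simp_all
  finally show ?thesis using assms by (simp add: l flip: gcd_mult_distrib_nat)
qed

lemma ramanujan_eq_sum_e_fun:
  assumes "0 < n" "d dvd n"
  shows "ramanujan d x = (\<Sum>l\<in>{1..n}. of_bool (n div gcd n l = d) * e_fun n (x * l))"
proof -
  define c where "c = n div d"
  have n: "n = c * d" and "0 < c" "0 < d"
    using assms by (auto simp: c_def)
  have "n div gcd n l = d \<longleftrightarrow> gcd n l = c" for l
    using \<open>0 < c\<close> \<open>0 < d\<close> gcd_dvd1[of n l] unfolding n
    by (metis div_mult_self_is_m div_mult_self1_is_m dvd_div_mult_self)
  then have "(\<Sum>l\<in>{1..n}. of_bool (n div gcd n l = d) * e_fun n (x * l))
      = (\<Sum>l\<in>{1..n}. (\<Sum>e | e dvd d. of_int (moebius e) * of_bool (c * e dvd l)) * e_fun n (x * l))"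
    by (simp only: of_bool_gcd_eq_sum_moebius[OF n \<open>0 < c\<close> \<open>0 < d\<close>])
  also have "\<dots> = (\<Sum>e | e dvd d. of_int (moebius e)
      * (\<Sum>l\<in>{1..n}. of_bool (c * e dvd l) * e_fun n (x * l)))"
    by (simp only: sum_distrib_left sum_distrib_right mult.assoc) (rule sum.swap)
  also have "\<dots> = (\<Sum>e | e dvd d. of_int (moebius e) * (of_bool (d div e dvd x) * of_nat (d div e)))"
  proof (rule sum.cong[OF refl])
    fix e assume "e \<in> {e. e dvd d}"
    then have "c * e dvd n" and "n div (c * e) = d div e"
      using \<open>0 < c\<close> by (auto simp: n)
    then show "of_int (moebius e) * (\<Sum>l\<in>{1..n}. of_bool (c * e dvd l) * e_fun n (x * l))
        = of_int (moebius e) * (of_bool (d div e dvd x) * of_nat (d div e))"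
      by (simp only: sum_e_fun_multiples[OF assms(1)])
  qed
  also have "\<dots> = (\<Sum>e | e dvd d. of_int (moebius (d div e)) * (of_bool (e dvd x) * of_nat e))"
    using \<open>0 < d\<close> by (intro sum.reindex_bij_witness[of _ "\<lambda>e. d div e" "\<lambda>e. d div e"])
      (auto simp: div_div_eq_right)
  also have "\<dots> = ramanujan d x"
    using \<open>0 < d\<close> by (auto simp: ramanujan_def intro: sum.mono_neutral_cong_right)
  finally show ?thesis ..
qed

section \<open>\<open>S_fun\<close> as a sum over divisor chains\<close>

definition divisor_lists :: "nat \<Rightarrow> nat \<Rightarrow> nat list set" where
  "divisor_lists m n = {D. length D = m \<and> (\<forall>d\<in>set D. d dvd n)}"

definition chain_prod :: "(nat \<Rightarrow> complex) list \<Rightarrow> nat \<Rightarrow> nat list \<Rightarrow> complex" where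
  "chain_prod g n D = (\<Prod>i<length D + 1. arith_at (g ! i) ((n # D @ [1]) ! i) ((n # D @ [1]) ! (i + 1)))"

definition powers_indicator :: "nat list \<Rightarrow> nat list \<Rightarrow> complex" where
  "powers_indicator gam D = (\<Prod>j<length gam. a_pow (gam ! j) (D ! j))"

definition dvd_indicator :: "nat list \<Rightarrow> nat list \<Rightarrow> complex" where
  "dvd_indicator D x = (\<Prod>j<length D. of_bool (D ! j dvd x ! j))"

lemma finite_divisor_lists: "0 < n \<Longrightarrow> finite (divisor_lists m n)"
  unfolding divisor_lists_def
  by (rule finite_subset[OF _ finite_lists_length_eq[OF finite_atMost[of n], of m]])
     (auto intro: dvd_imp_le)

lemma divisor_lists_nth_dvd: "D \<in> divisor_lists m n \<Longrightarrow> j < m \<Longrightarrow> D ! j dvd n"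
  by (auto simp: divisor_lists_def)

lemma chain_prod_nonzero_chain_dvd:
  assumes "chain_prod g n D \<noteq> 0" "i \<le> j" "j \<le> length D + 1"
  shows "(n # D @ [1]) ! j dvd (n # D @ [1]) ! i"
proof (rule dvd_chain[OF _ assms(2,3)])
  fix k assume "k < length D + 1"
  with assms(1) have "arith_at (g ! k) ((n # D @ [1]) ! k) ((n # D @ [1]) ! (k + 1)) \<noteq> 0"
    unfolding chain_prod_def by (metis (no_types, lifting) finite_lessThan lessThan_iff prod_zero_iff)
  then show "(n # D @ [1]) ! Suc k dvd (n # D @ [1]) ! k"
    by (auto simp: arith_at_def split: if_splits)
qed

lemma dvd_Gcd_take_Cons_iff:
  fixes a n :: nat
  assumes "j < length x"
  shows "a dvd Gcd (set (take (j + 2) (n # x))) \<longleftrightarrow> a dvd n \<and> (\<forall>i\<le>j. a dvd x ! i)"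
proof -
  have "set (take (j + 2) (n # x)) = insert n ((!) x ` {0..<Suc j})"
    using assms by (simp add: nth_image)
  then show ?thesis by (auto simp: dvd_Gcd_iff less_Suc_eq_le)
qed

lemma chain_prod_nonzero_imp_dvd:
  assumes "chain_prod g n D \<noteq> 0" "j < length D"
  shows "D ! j dvd n" and "i \<le> j \<Longrightarrow> D ! j dvd D ! i"
  using chain_prod_nonzero_chain_dvd[OF assms(1), of 0 "Suc j"]
    chain_prod_nonzero_chain_dvd[OF assms(1), of "Suc i" "Suc j"] assms(2)
  by (simp_all add: nth_append)

lemma dvd_Gcd_take_iff_of_chain:
  assumes "chain_prod g n D \<noteq> 0" "length D = m" "length x = m"
  shows "(\<forall>j<m. D ! j dvd Gcd (set (take (j + 2) (n # x)))) \<longleftrightarrow> (\<forall>j<m. D ! j dvd x ! j)"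
proof -
  note chain = chain_prod_nonzero_imp_dvd[OF assms(1)]
  have "D ! j dvd Gcd (set (take (j + 2) (n # x))) \<longleftrightarrow> (\<forall>i\<le>j. D ! j dvd x ! i)" if "j < m" for j
    using that assms chain(1)[of j] by (simp only: dvd_Gcd_take_Cons_iff) simp
  then show ?thesis
    using chain(2) assms(2) by (auto intro: dvd_trans) (meson dvd_trans le_less_trans)
qed

definition admissible_lists :: "nat list \<Rightarrow> nat \<Rightarrow> nat list \<Rightarrow> nat list set" where
  "admissible_lists gam n x = {D. length D = length gam \<and> (\<forall>j<length gam.
    (\<exists>r>0. r ^ gam ! j = D ! j) \<and> D ! j dvd Gcd (set (take (j + 2) (n # x))))}"

lemma S_fun_eq_sum_admissible_lists:
  assumes "\<forall>g\<in>set gam. 1 \<le> g"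
  shows "S_fun gam \<eta> g (n # x) = (\<Sum>D\<in>admissible_lists gam n x. \<eta> D * chain_prod g n D)"
proof -
  define m where "m = length gam"
  define I where "I = {ds. length ds = m \<and>
    (\<forall>j<m. 0 < ds ! j \<and> ds ! j ^ gam ! j dvd Gcd (set (take (j + 2) (n # x))))}"
  define pows where "pows ds = map (\<lambda>j. ds ! j ^ gam ! j) [0..<m]" for ds :: "nat list"
  have "S_fun gam \<eta> g (n # x) = (\<Sum>ds\<in>I. \<eta> (pows ds) * chain_prod g n (pows ds))"
    unfolding S_fun_def I_def pows_def chain_prod_def Let_def m_def by simp
  also have "\<dots> = (\<Sum>D\<in>pows ` I. \<eta> D * chain_prod g n D)"
  proof (rule sum.reindex[symmetric, unfolded comp_def], rule inj_onI)
    fix ds es assume "ds \<in> I" "es \<in> I" "pows ds = pows es"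
    moreover have "0 < gam ! j" if "j < m" for j
      using assms that by (auto simp: m_def Suc_le_eq)
    ultimately show "ds = es"
      by (auto simp: I_def pows_def list_eq_iff_nth_eq power_eq_iff_eq_base dest!: map_eq_conv[THEN iffD1])
  qed
  also have "pows ` I = admissible_lists gam n x"
  proof
    show "pows ` I \<subseteq> admissible_lists gam n x"
      by (auto simp: I_def admissible_lists_def pows_def m_def)
    show "admissible_lists gam n x \<subseteq> pows ` I"
    proof
      fix D assume D: "D \<in> admissible_lists gam n x"
      then have "\<forall>j<m. \<exists>r>0. r ^ gam ! j = D ! j"
        by (simp add: admissible_lists_def m_def)
      then obtain r where r: "\<forall>j<m. 0 < r j \<and> r j ^ gam ! j = D ! j"
        by metis
      have "pows (map r [0..<m]) = D"
      proof (rule nth_equalityI)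
        show "length (pows (map r [0..<m])) = length D"
          using D by (simp add: pows_def admissible_lists_def m_def)
        fix j assume "j < length (pows (map r [0..<m]))"
        then show "pows (map r [0..<m]) ! j = D ! j"
          using r by (simp add: pows_def)
      qed
      moreover have "map r [0..<m] \<in> I"
        using D r by (simp add: admissible_lists_def I_def m_def)
      ultimately show "D \<in> pows ` I"
        by blast
    qed
  qed
  finally show ?thesis .
qed

lemma admissible_lists_subset:
  "length gam = m \<Longrightarrow> length x = m \<Longrightarrow> admissible_lists gam n x \<subseteq> divisor_lists m n"
  by (auto simp: admissible_lists_def divisor_lists_def dvd_Gcd_take_Cons_iff in_set_conv_nth)

lemma S_fun_eq_sum_divisor_lists:
  assumes "length gam = m" "\<forall>g\<in>set gam. 1 \<le> g" "0 < n" "length x = m"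
  shows "S_fun gam \<eta> g (n # x)
    = (\<Sum>D\<in>divisor_lists m n. powers_indicator gam D * \<eta> D * chain_prod g n D * dvd_indicator D x)"
proof -
  have "S_fun gam \<eta> g (n # x)
      = (\<Sum>D\<in>divisor_lists m n. of_bool (D \<in> admissible_lists gam n x) * (\<eta> D * chain_prod g n D))"
    using admissible_lists_subset[OF assms(1,4)] finite_divisor_lists[OF assms(3)]
    by (simp add: S_fun_eq_sum_admissible_lists[OF assms(2)] Int_absorb1)
  also have "\<dots> = (\<Sum>D\<in>divisor_lists m n. powers_indicator gam D * \<eta> D * chain_prod g n D * dvd_indicator D x)"
  proof (rule sum.cong[OF refl])
    fix D assume D: "D \<in> divisor_lists m n"
    show "of_bool (D \<in> admissible_lists gam n x) * (\<eta> D * chain_prod g n D)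
        = powers_indicator gam D * \<eta> D * chain_prod g n D * dvd_indicator D x"
    proof (cases "chain_prod g n D = 0")
      case False
      then have "D \<in> admissible_lists gam n x
          \<longleftrightarrow> (\<forall>j<m. \<exists>r>0. r ^ gam ! j = D ! j) \<and> (\<forall>j<m. D ! j dvd x ! j)"
        using D assms dvd_Gcd_take_iff_of_chain[OF False _ \<open>length x = m\<close>]
        by (auto simp: admissible_lists_def divisor_lists_def)
      then show ?thesis
        using D assms(1) by (simp add: powers_indicator_def dvd_indicator_def a_pow_def divisor_lists_def
            prod_of_bool flip: of_bool_def) blast
    qed simp
  qed
  finally show ?thesis .
qed

section \<open>The dual chain \<open>D \<mapsto> (n/D\<^sub>m, \<dots>, n/D\<^sub>1)\<close>\<close>

definition dual_divisors :: "nat \<Rightarrow> nat list \<Rightarrow> nat list" where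
  "dual_divisors n D = map (\<lambda>d. n div d) (rev D)"

lemma length_dual_divisors [simp]: "length (dual_divisors n D) = length D"
  by (simp add: dual_divisors_def)

lemma nth_dual_divisors: "j < length D \<Longrightarrow> dual_divisors n D ! j = n div D ! (length D - Suc j)"
  by (simp add: dual_divisors_def rev_nth)

lemma dual_divisors_mem: "D \<in> divisor_lists m n \<Longrightarrow> dual_divisors n D \<in> divisor_lists m n"
  by (auto simp: divisor_lists_def dual_divisors_def div_dvd_self_of_dvd)

lemma dual_dual_divisors:
  "0 < n \<Longrightarrow> D \<in> divisor_lists m n \<Longrightarrow> dual_divisors n (dual_divisors n D) = D"
  by (auto simp: dual_divisors_def divisor_lists_def rev_map[symmetric] div_div_cancel_of_dvd
      intro!: map_idI)

lemma xi_t_dual_divisors: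
  assumes "0 < n" "D \<in> divisor_lists m n" "length gam = m"
  shows "xi_t gam \<xi> n (dual_divisors n D) = powers_indicator gam D * \<xi> D"
proof -
  have "map (\<lambda>d. n div d) (rev (dual_divisors n D)) = D"
    using dual_dual_divisors[OF assms(1,2)] by (simp add: dual_divisors_def)
  moreover have "n div dual_divisors n D ! (m - 1 - j) = D ! j" if "j < m" for j
    using assms that by (auto simp: nth_dual_divisors divisor_lists_def div_div_cancel_of_dvd
        Suc_diff_Suc)
  ultimately show ?thesis
    using assms(3) by (simp add: xi_t_def powers_indicator_def)
qed

lemma dvd_indicator_dual_divisors:
  assumes "D \<in> divisor_lists m n" "length ls = m"
  shows "dvd_indicator (dual_divisors n D) (rev ls) = (\<Prod>j<m. of_bool (n div D ! j dvd ls ! j))"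
proof -
  have "dvd_indicator (dual_divisors n D) (rev ls)
      = (\<Prod>j<m. of_bool (n div D ! (m - Suc j) dvd ls ! (m - Suc j)))"
    using assms by (auto simp: dvd_indicator_def divisor_lists_def nth_dual_divisors rev_nth intro!: prod.cong)
  also have "\<dots> = (\<Prod>j<m. of_bool (n div D ! j dvd ls ! j))"
    by (rule prod.nat_diff_reindex)
  finally show ?thesis .
qed

lemma arith_at_div_div:
  "0 < n \<Longrightarrow> a dvd n \<Longrightarrow> b dvd n \<Longrightarrow> arith_at h (n div a) (n div b) = arith_at h b a"
  by (auto simp: arith_at_def dvd_div_div_iff div_div_div_of_dvd)

lemma arith_at_times_power:
  "arith_at (\<lambda>x. of_nat x ^ i * h x) a b = of_nat (a div b) ^ i * arith_at h a b"
  by (simp add: arith_at_def)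

lemma nth_chain_dvd:
  assumes "D \<in> divisor_lists m n" "k \<le> Suc m"
  shows "(n # D @ [1]) ! k dvd n"
  using assms by (cases k) (auto simp: divisor_lists_def nth_append)

lemma nth_dual_chain:
  assumes "0 < n" "D \<in> divisor_lists m n" "i \<le> Suc m"
  shows "(n # dual_divisors n D @ [1]) ! i = n div (n # D @ [1]) ! (Suc m - i)"
  using assms
  by (cases i) (auto simp: divisor_lists_def nth_append nth_dual_divisors Suc_diff_le)

lemma nth_f_tilde_t:
  "length f = m + 1 \<Longrightarrow> i \<le> m \<Longrightarrow> f_tilde_t f ! i = (\<lambda>x. of_nat x ^ i * (f ! (m - i)) x)"
  unfolding f_tilde_t_def Let_def by (simp only: nth_map_upt) simp

lemma arith_at_f_tilde_t_dual_chain: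
  assumes "0 < n" "D \<in> divisor_lists m n" "length f = m + 1" "i \<le> m"
  defines "Q \<equiv> n # D @ [1]" and "Q' \<equiv> n # dual_divisors n D @ [1]"
  shows "arith_at (f_tilde_t f ! i) (Q' ! i) (Q' ! (i + 1))
    = of_nat (Q ! (m - i) div Q ! Suc (m - i)) ^ i * arith_at (f ! (m - i)) (Q ! (m - i)) (Q ! Suc (m - i))"
proof -
  have "Q' ! i = n div Q ! Suc (m - i)"
    using nth_dual_chain[OF assms(1,2), of i] assms(4) by (simp add: Q_def Q'_def Suc_diff_le)
  moreover have "Q' ! (i + 1) = n div Q ! (m - i)"
    using nth_dual_chain[OF assms(1,2), of "i + 1"] assms(4) by (simp add: Q_def Q'_def)
  ultimately have "arith_at (f_tilde_t f ! i) (Q' ! i) (Q' ! (i + 1))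
      = arith_at (\<lambda>x. of_nat x ^ i * (f ! (m - i)) x) (n div Q ! Suc (m - i)) (n div Q ! (m - i))"
    by (simp only: nth_f_tilde_t[OF assms(3,4)])
  also have "\<dots> = arith_at (\<lambda>x. of_nat x ^ i * (f ! (m - i)) x) (Q ! (m - i)) (Q ! Suc (m - i))"
    using nth_chain_dvd[OF assms(2), of "Suc (m - i)", folded Q_def]
      nth_chain_dvd[OF assms(2), of "m - i", folded Q_def]
    by (simp add: arith_at_div_div assms(1))
  finally show ?thesis
    by (simp add: arith_at_times_power)
qed

lemma chain_prod_f_tilde_t_dual_divisors:
  assumes "0 < n" "D \<in> divisor_lists m n" "length f = m + 1"
  defines "Q \<equiv> n # D @ [1]"
  shows "chain_prod (f_tilde_t f) n (dual_divisors n D)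
    = (\<Prod>k<m + 1. of_nat (Q ! k div Q ! Suc k) ^ (m - k)) * chain_prod f n D"
proof -
  have len: "length D = m"
    using assms(2) by (simp add: divisor_lists_def)
  define h where "h k = of_nat (Q ! k div Q ! Suc k) ^ (m - k) * arith_at (f ! k) (Q ! k) (Q ! Suc k)" for k
  have "chain_prod (f_tilde_t f) n (dual_divisors n D) = (\<Prod>i<m + 1. h (m + 1 - Suc i))"
    unfolding chain_prod_def length_dual_divisors len
    using arith_at_f_tilde_t_dual_chain[OF assms(1-3), folded Q_def] by (intro prod.cong) (simp_all add: h_def)
  also have "\<dots> = (\<Prod>k<m + 1. h k)"
    by (rule prod.nat_diff_reindex)
  also have "\<dots> = (\<Prod>k<m + 1. of_nat (Q ! k div Q ! Suc k) ^ (m - k)) * chain_prod f n D"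
    by (simp add: h_def prod.distrib chain_prod_def len Q_def)
  finally show ?thesis .
qed

lemma chain_prod_f_tilde_t_dual_divisors_div_power:
  assumes "0 < n" "D \<in> divisor_lists m n" "length f = m + 1"
  shows "chain_prod (f_tilde_t f) n (dual_divisors n D) / of_nat n ^ m
    = (\<Prod>j<m. 1 / of_nat (D ! j)) * chain_prod f n D"
proof (cases "chain_prod f n D = 0")
  case True
  then show ?thesis by (simp add: chain_prod_f_tilde_t_dual_divisors[OF assms])
next
  case False
  define Q where "Q = n # D @ [1]"
  have len: "length D = m"
    using assms(2) by (simp add: divisor_lists_def)
  have pos: "0 < Q ! k" if "k \<le> Suc m" for k
    using nth_chain_dvd[OF assms(2) that] assms(1) by (simp add: Q_def dvd_pos_nat)
  have "of_nat (Q ! k div Q ! Suc k) = (of_nat (Q ! k) / of_nat (Q ! Suc k) :: complex)" if k: "k \<le> m" for k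
  proof -
    have "Q ! Suc k dvd Q ! k"
      using chain_prod_nonzero_chain_dvd[OF False, of k "Suc k", folded Q_def] k len by simp
    then obtain t where "Q ! k = Q ! Suc k * t" ..
    then show ?thesis using pos[of "Suc k"] k by simp
  qed
  then have "(\<Prod>k<m + 1. of_nat (Q ! k div Q ! Suc k) ^ (m - k))
      = (\<Prod>k\<le>m. (of_nat (Q ! k) / of_nat (Q ! Suc k)) ^ (m - k) :: complex)"
    by (simp add: lessThan_Suc_atMost)
  also have "\<dots> = of_nat (Q ! 0) ^ m / (\<Prod>k<m. of_nat (Q ! Suc k))"
    by (rule prod_ratio_powers_telescope) (use pos in simp)
  also have "\<dots> = of_nat n ^ m / (\<Prod>j<m. of_nat (D ! j))"
    by (simp add: Q_def nth_append len)
  finally show ?thesis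
    using assms(1) by (simp add: chain_prod_f_tilde_t_dual_divisors[OF assms, folded Q_def] prod_dividef)
qed

section \<open>Finite Fourier and Ramanujan expansions\<close>

definition dvd_indicator_coeff :: "nat \<Rightarrow> nat list \<Rightarrow> nat list \<Rightarrow> complex" where
  "dvd_indicator_coeff n D ls = (\<Prod>j<length D. of_bool (n div D ! j dvd ls ! j) / of_nat (D ! j))"

lemma lists_length_subset_conv_nth:
  "{ls. length ls = m \<and> set ls \<subseteq> A} = {ls. length ls = m \<and> (\<forall>j<m. ls ! j \<in> A)}"
  by (auto simp: in_set_conv_nth subset_iff)

lemma dvd_indicator_eq_sum_e_fun:
  assumes "0 < n" "D \<in> divisor_lists m n"
  shows "dvd_indicator D x = (\<Sum>ls | length ls = m \<and> set ls \<subseteq> {1..n}.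
    dvd_indicator_coeff n D ls * (\<Prod>j<m. e_fun n (x ! j * ls ! j)))"
proof -
  have len: "length D = m"
    using assms(2) by (simp add: divisor_lists_def)
  have "of_bool (D ! j dvd x ! j)
      = (\<Sum>l\<in>{1..n}. of_bool (n div D ! j dvd l) / of_nat (D ! j) * e_fun n (x ! j * l))" if "j < m" for j
  proof -
    have "D ! j dvd n" "0 < D ! j"
      using assms that by (auto simp: divisor_lists_def dvd_pos_nat)
    then have "n div D ! j dvd n" "n div (n div D ! j) = D ! j"
      using assms(1) by (simp_all add: div_dvd_self_of_dvd div_div_cancel_of_dvd)
    then show ?thesis
      using sum_e_fun_multiples[OF assms(1), of "n div D ! j" "x ! j"] \<open>0 < D ! j\<close>
      by (simp add: sum_divide_distrib[symmetric])
  qed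
  then have "dvd_indicator D x
      = (\<Prod>j<m. \<Sum>l\<in>{1..n}. of_bool (n div D ! j dvd l) / of_nat (D ! j) * e_fun n (x ! j * l))"
    by (simp add: dvd_indicator_def len)
  also have "\<dots> = (\<Sum>ls | length ls = m \<and> (\<forall>j<m. ls ! j \<in> {1..n}).
      \<Prod>j<m. of_bool (n div D ! j dvd ls ! j) / of_nat (D ! j) * e_fun n (x ! j * ls ! j))"
    by (rule prod_sum_eq_sum_lists)
  also have "\<dots> = (\<Sum>ls | length ls = m \<and> set ls \<subseteq> {1..n}.
      dvd_indicator_coeff n D ls * (\<Prod>j<m. e_fun n (x ! j * ls ! j)))"
    by (simp only: prod.distrib lists_length_subset_conv_nth dvd_indicator_coeff_def len)
  finally show ?thesis .
qed

lemma powers_indicator_replicate_1: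
  "0 < n \<Longrightarrow> D \<in> divisor_lists m n \<Longrightarrow> powers_indicator (replicate m 1) D = 1"
  by (auto simp: powers_indicator_def a_pow_def divisor_lists_def dvd_pos_nat intro!: prod.neutral)

lemma S1_fun_transposed_eq_sum_divisor_lists:
  assumes "length gam = m" "length f = m + 1" "0 < n" "length ls = m"
  shows "S1_fun m (xi_t gam \<xi> n) (f_tilde_t f) (n # rev ls) / of_nat n ^ m
    = (\<Sum>D\<in>divisor_lists m n. powers_indicator gam D * \<xi> D * chain_prod f n D * dvd_indicator_coeff n D ls)"
proof -
  have "S1_fun m (xi_t gam \<xi> n) (f_tilde_t f) (n # rev ls) = (\<Sum>E\<in>divisor_lists m n.
      powers_indicator (replicate m 1) E * xi_t gam \<xi> n E * chain_prod (f_tilde_t f) n E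
        * dvd_indicator E (rev ls))"
    unfolding S1_fun_def using assms by (intro S_fun_eq_sum_divisor_lists) auto
  also have "\<dots> = (\<Sum>E\<in>divisor_lists m n.
      xi_t gam \<xi> n E * chain_prod (f_tilde_t f) n E * dvd_indicator E (rev ls))"
    by (intro sum.cong refl) (simp only: powers_indicator_replicate_1[OF assms(3)] mult_1)
  also have "\<dots> = (\<Sum>D\<in>divisor_lists m n. xi_t gam \<xi> n (dual_divisors n D)
      * chain_prod (f_tilde_t f) n (dual_divisors n D) * dvd_indicator (dual_divisors n D) (rev ls))"
    using assms(3) dual_dual_divisors dual_divisors_mem
    by (intro sum.reindex_bij_witness[of _ "dual_divisors n" "dual_divisors n"]) auto
  finally have "S1_fun m (xi_t gam \<xi> n) (f_tilde_t f) (n # rev ls) / of_nat n ^ m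
      = (\<Sum>D\<in>divisor_lists m n. xi_t gam \<xi> n (dual_divisors n D)
        * (chain_prod (f_tilde_t f) n (dual_divisors n D) / of_nat n ^ m)
        * dvd_indicator (dual_divisors n D) (rev ls))"
    by (simp add: sum_divide_distrib)
  also have "\<dots> = (\<Sum>D\<in>divisor_lists m n.
      powers_indicator gam D * \<xi> D * chain_prod f n D * dvd_indicator_coeff n D ls)"
  proof (rule sum.cong[OF refl])
    fix D assume D: "D \<in> divisor_lists m n"
    then have "dvd_indicator_coeff n D ls
        = (\<Prod>j<m. 1 / of_nat (D ! j)) * (\<Prod>j<m. of_bool (n div D ! j dvd ls ! j))"
      by (simp add: dvd_indicator_coeff_def divisor_lists_def flip: prod.distrib)
    then show "xi_t gam \<xi> n (dual_divisors n D) * (chain_prod (f_tilde_t f) n (dual_divisors n D) / of_nat n ^ m)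
        * dvd_indicator (dual_divisors n D) (rev ls)
        = powers_indicator gam D * \<xi> D * chain_prod f n D * dvd_indicator_coeff n D ls"
      by (simp add: xi_t_dual_divisors[OF assms(3) D assms(1)] dvd_indicator_dual_divisors[OF D assms(4)]
          chain_prod_f_tilde_t_dual_divisors_div_power[OF assms(3) D assms(2)])
  qed
  finally show ?thesis .
qed

lemma S_fun_eq_sum_e_fun:
  assumes "length gam = m" "\<forall>g\<in>set gam. 1 \<le> g" "length f = m + 1" "0 < n" "length x = m"
  shows "S_fun gam \<xi> f (n # x) = (\<Sum>ls | length ls = m \<and> set ls \<subseteq> {1..n}.
    (S1_fun m (xi_t gam \<xi> n) (f_tilde_t f) (n # rev ls) / of_nat n ^ m) * (\<Prod>j<m. e_fun n (x ! j * ls ! j)))"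
proof -
  define L where "L = {ls. length ls = m \<and> set ls \<subseteq> {1..n}}"
  define W where "W D = powers_indicator gam D * \<xi> D * chain_prod f n D" for D
  define E where "E ls = (\<Prod>j<m. e_fun n (x ! j * ls ! j))" for ls
  have "S_fun gam \<xi> f (n # x) = (\<Sum>D\<in>divisor_lists m n. W D * dvd_indicator D x)"
    unfolding W_def using assms by (simp add: S_fun_eq_sum_divisor_lists)
  also have "\<dots> = (\<Sum>D\<in>divisor_lists m n. \<Sum>ls\<in>L. W D * dvd_indicator_coeff n D ls * E ls)"
    using assms(4) by (simp add: dvd_indicator_eq_sum_e_fun L_def E_def sum_distrib_left mult.assoc)
  also have "\<dots> = (\<Sum>ls\<in>L. (\<Sum>D\<in>divisor_lists m n. W D * dvd_indicator_coeff n D ls) * E ls)"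
    by (subst sum.swap) (simp add: sum_distrib_right)
  also have "\<dots> = (\<Sum>ls\<in>L. (S1_fun m (xi_t gam \<xi> n) (f_tilde_t f) (n # rev ls) / of_nat n ^ m) * E ls)"
    using assms by (intro sum.cong refl) (simp add: S1_fun_transposed_eq_sum_divisor_lists W_def L_def)
  finally show ?thesis by (simp add: L_def E_def)
qed

lemma dvd_indicator_coeff_map_gcd:
  assumes "D \<in> divisor_lists m n" "length ls = m"
  shows "dvd_indicator_coeff n D (map (gcd n) ls) = dvd_indicator_coeff n D ls"
  using assms by (auto simp: dvd_indicator_coeff_def divisor_lists_def div_dvd_self_of_dvd intro!: prod.cong)

lemma sum_e_fun_eq_sum_ramanujan:
  assumes "0 < n" and gcd_inv: "\<And>ls. length ls = m \<Longrightarrow> A (map (gcd n) ls) = A ls"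
  shows "(\<Sum>ls | length ls = m \<and> set ls \<subseteq> {1..n}. A ls * (\<Prod>j<m. e_fun n (x ! j * ls ! j)))
    = (\<Sum>ds\<in>divisor_lists m n. A (map (\<lambda>d. n div d) ds) * (\<Prod>j<m. ramanujan (ds ! j) (x ! j)))"
proof -
  define L where "L = {ls. length ls = m \<and> set ls \<subseteq> {1..n}}"
  define E where "E ls = (\<Prod>j<m. e_fun n (x ! j * ls ! j))" for ls
  define G where "G ls = map (\<lambda>l. n div gcd n l) ls" for ls
  have "finite L"
    unfolding L_def by (rule finite_lists_length_eq[of "{1..n}" m, simplified conj_commute]) simp
  moreover have "G ` L \<subseteq> divisor_lists m n"
    by (auto simp: G_def L_def divisor_lists_def div_dvd_self_of_dvd)
  ultimately have "(\<Sum>ls\<in>L. A ls * E ls)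
      = (\<Sum>ds\<in>divisor_lists m n. \<Sum>ls | ls \<in> L \<and> G ls = ds. A ls * E ls)"
    using finite_divisor_lists[OF assms(1)] by (simp add: sum.group[symmetric])
  also have "\<dots> = (\<Sum>ds\<in>divisor_lists m n.
      A (map (\<lambda>d. n div d) ds) * (\<Prod>j<m. ramanujan (ds ! j) (x ! j)))"
  proof (rule sum.cong[OF refl])
    fix ds assume ds: "ds \<in> divisor_lists m n"
    define F where "F = {ls. length ls = m \<and> (\<forall>j<m. ls ! j \<in> {l \<in> {1..n}. n div gcd n l = ds ! j})}"
    have F: "{ls. ls \<in> L \<and> G ls = ds} = F"
      using ds by (auto simp: L_def F_def G_def divisor_lists_def lists_length_subset_conv_nth list_eq_iff_nth_eq)
    have "A ls = A (map (\<lambda>d. n div d) ds)" if "ls \<in> F" for ls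
    proof -
      have "gcd n (ls ! j) = n div ds ! j" if "j < m" for j
      proof -
        have "n div gcd n (ls ! j) = ds ! j"
          using \<open>ls \<in> F\<close> that by (simp add: F_def)
        then show ?thesis
          by (metis assms(1) div_div_cancel_of_dvd gcd_dvd1)
      qed
      then have "map (gcd n) ls = map (\<lambda>d. n div d) ds"
        using that ds by (auto simp: F_def divisor_lists_def list_eq_iff_nth_eq)
      then show ?thesis
        using gcd_inv[of ls] that by (simp add: F_def)
    qed
    then have "(\<Sum>ls\<in>F. A ls * E ls) = A (map (\<lambda>d. n div d) ds) * (\<Sum>ls\<in>F. E ls)"
      by (simp add: sum_distrib_left)
    also have "(\<Sum>ls\<in>F. E ls)
        = (\<Prod>j<m. \<Sum>l | l \<in> {1..n} \<and> n div gcd n l = ds ! j. e_fun n (x ! j * l))"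
      unfolding F_def E_def by (rule prod_sum_eq_sum_lists[symmetric])
    also have "\<dots> = (\<Prod>j<m. ramanujan (ds ! j) (x ! j))"
      using ds assms(1)
      by (intro prod.cong refl) (simp add: ramanujan_eq_sum_e_fun divisor_lists_nth_dvd Int_def conj_commute)
    finally show "(\<Sum>ls | ls \<in> L \<and> G ls = ds. A ls * E ls)
        = A (map (\<lambda>d. n div d) ds) * (\<Prod>j<m. ramanujan (ds ! j) (x ! j))"
      by (simp only: F)
  qed
  finally show ?thesis by (simp add: L_def E_def)
qed

theorem theorem2p7:
  fixes m :: nat and gam :: "nat list" and f :: "(nat \<Rightarrow> complex) list"
    and \<xi> :: "nat list \<Rightarrow> complex" and n1 :: nat and ns :: "nat list"
  assumes "m \<ge> 1"
    and "length gam = m" and "\<forall>g\<in>set gam. g \<ge> 1"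
    and "length f = m + 1"
    and "n1 \<ge> 1"
    and "length ns = m" and "\<forall>n\<in>set ns. n \<ge> 1"
  shows "(S_fun gam \<xi> f (n1 # ns) =
           (\<Sum>ls\<in>{ls. length ls = m \<and> set ls \<subseteq> {1..n1}}.
              (S1_fun m (xi_t gam \<xi> n1) (f_tilde_t f) (n1 # rev ls) / of_nat n1 ^ m)
              * (\<Prod>i<m. e_fun n1 (ns ! i * ls ! i))))
       \<and> (S_fun gam \<xi> f (n1 # ns) =
           (\<Sum>ds\<in>{ds. length ds = m \<and> (\<forall>d\<in>set ds. d dvd n1)}.
              (S1_fun m (xi_t gam \<xi> n1) (f_tilde_t f) (n1 # map (\<lambda>d. n1 div d) (rev ds)) / of_nat n1 ^ m)
              * (\<Prod>i<m. ramanujan (ds ! i) (ns ! i))))"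
proof -
  define a where "a ls = S1_fun m (xi_t gam \<xi> n1) (f_tilde_t f) (n1 # rev ls) / of_nat n1 ^ m" for ls
  have "0 < n1" using assms(5) by simp
  have fourier: "S_fun gam \<xi> f (n1 # ns) = (\<Sum>ls | length ls = m \<and> set ls \<subseteq> {1..n1}.
      a ls * (\<Prod>i<m. e_fun n1 (ns ! i * ls ! i)))"
    unfolding a_def using assms(2-4) \<open>0 < n1\<close> assms(6) by (rule S_fun_eq_sum_e_fun)
  have "a (map (gcd n1) ls) = a ls" if "length ls = m" for ls
    using assms(2,4) \<open>0 < n1\<close> that
    by (simp add: a_def S1_fun_transposed_eq_sum_divisor_lists dvd_indicator_coeff_map_gcd cong: sum.cong)
  then have "S_fun gam \<xi> f (n1 # ns) = (\<Sum>ds\<in>divisor_lists m n1.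
      a (map (\<lambda>d. n1 div d) ds) * (\<Prod>i<m. ramanujan (ds ! i) (ns ! i)))"
    unfolding fourier by (rule sum_e_fun_eq_sum_ramanujan[OF \<open>0 < n1\<close>])
  with fourier show ?thesis
    by (simp add: a_def divisor_lists_def rev_map)
qed

end
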